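(* Let $\{f_n\}_{n\ge 0}$ be the Fine numbers, determined by $f_0=1$, $f_1=0$ and $2(n+1)f_n=(7n-5)f_{n-1}+2(2n-1)f_{n-2}$ for $n\ge 2$. Then the sequence $\{f_n\}_{n\ge 2}$ is log-convex.
   Context: The Fine number $f_n$ counts Dyck paths from $(0,0)$ to $(2n,0)$ with no hills; the recurrence given determines them ($f_2=1,f_3=2,f_4=6,f_5=18,\dots$). A sequence $a_0,a_1,\ldots$ of nonnegative real numbers is log-convex if $a_{k-1}a_{k+1}\ge a_k^2$ for all $k\ge 1$. *)

theory Defs
  imports Complex_Main
begin

fun fine :: "nat \<Rightarrow> real" where
  "fine 0 = 1"
| "fine (Suc 0) = 0"
| "fine (Suc (Suc m)) =
     ((7 * real (m + 2) - 5) * fine (Suc m) + 2 * (2 * real (m + 2) - 1) * fine m)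
       / (2 * (real (m + 2) + 1))"

lemma fine_recurrence:
  assumes "n \<ge> 2"
  shows "2 * (real n + 1) * fine n
           = (7 * real n - 5) * fine (n - 1) + 2 * (2 * real n - 1) * fine (n - 2)"
proof -
  obtain m where n: "n = Suc (Suc m)" using assms by (metis add_2_eq_Suc le_Suc_ex)
  show ?thesis unfolding n by (simp add: field_simps)
qed

end

theory Submission
  imports Defs
begin

text \<open>For n \<ge> 3 the ratio f(n+1)/f(n) lies between 2(2n+1)/(n+2) and 2(2n+3)/(n+3), and the
  recurrence carries these bounds from n to n+1. As the upper bound at n is the lower bound at
  n+1, the ratios f(n+1)/f(n) are nondecreasing, which is log-convexity.\<close>

lemma square_le_mult_of_separated_ratios:
  fixes a b c p q :: "'a::linordered_idom"
  assumes "0 \<le> a" "0 \<le> b" "0 < p"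
    and "p * b \<le> q * a" "q * b \<le> p * c"
  shows "b\<^sup>2 \<le> a * c"
proof -
  have "p * b\<^sup>2 = (p * b) * b" by (simp add: power2_eq_square)
  also have "\<dots> \<le> (q * a) * b" using assms by (simp add: mult_right_mono)
  also have "\<dots> = a * (q * b)" by (simp add: algebra_simps)
  also have "\<dots> \<le> a * (p * c)" using assms by (simp add: mult_left_mono)
  finally have "p * b\<^sup>2 \<le> p * (a * c)" by (simp add: algebra_simps)
  then show ?thesis using \<open>0 < p\<close> by simp
qed

lemma ratio_bounds_step:
  fixes x a b c :: real
  assumes "0 \<le> x" "0 \<le> b"
    and lower: "2 * (2*x + 1) * a \<le> (x + 2) * b"
    and upper: "(x + 3) * b \<le> 2 * (2*x + 3) * a"
    and recurrence: "2 * (x + 3) * c = (7*x + 9) * b + 2 * (2*x + 3) * a"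
  shows "2 * (2*x + 3) * b \<le> (x + 3) * c" "(x + 4) * c \<le> 2 * (2*x + 5) * b"
proof -
  show "2 * (2*x + 3) * b \<le> (x + 3) * c"
    using upper recurrence by (simp add: algebra_simps)
  have "(2*x + 1) * (2 * (x + 3) * ((x + 4) * c)) = (2*x + 1) * (x + 4) * (2 * (x + 3) * c)"
    by (simp add: algebra_simps)
  also have "\<dots> = (x + 4) * ((2*x + 1) * (7*x + 9) * b + (2*x + 3) * (2 * (2*x + 1) * a))"
    unfolding recurrence by (simp add: algebra_simps)
  also have "\<dots> \<le> (x + 4) * ((2*x + 1) * (7*x + 9) * b + (2*x + 3) * ((x + 2) * b))"
    using lower assms(1) by (intro mult_left_mono add_left_mono) auto
  also have "\<dots> = (2*x + 1) * (2 * (x + 3) * (2 * (2*x + 5) * b)) - 21 * x * b"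
    by (simp add: algebra_simps)
  also have "\<dots> \<le> (2*x + 1) * (2 * (x + 3) * (2 * (2*x + 5) * b))"
    using assms(1,2) by simp
  finally show "(x + 4) * c \<le> 2 * (2*x + 5) * b"
    using assms(1) by (simp add: mult_le_cancel_left_pos)
qed

lemma fine_nonneg: "0 \<le> fine n"
  by (induction n rule: fine.induct) (auto intro!: divide_nonneg_pos add_nonneg_nonneg)

lemma fine_small_values: "fine 2 = 1" "fine 3 = 2" "fine 4 = 6"
  by (simp_all add: numeral_eq_Suc)

lemma fine_ratio_bounds:
  assumes "n \<ge> 3"
  shows "2 * (2 * real n + 1) * fine n \<le> (real n + 2) * fine (Suc n)
      \<and> (real n + 3) * fine (Suc n) \<le> 2 * (2 * real n + 3) * fine n"
  using assms
proof (induction n rule: dec_induct)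
  case base
  then show ?case by (simp add: fine_small_values flip: numeral_3_eq_3)
next
  case (step n)
  have "2 * (real n + 3) * fine (Suc (Suc n))
      = (7 * real n + 9) * fine (Suc n) + 2 * (2 * real n + 3) * fine n"
    using fine_recurrence[of "Suc (Suc n)"] by (simp add: algebra_simps)
  from ratio_bounds_step[OF _ fine_nonneg _ _ this] step.IH
  show ?case by (simp add: algebra_simps)
qed

lemma fine_ratio_upper:
  assumes "n \<ge> 2"
  shows "(real n + 3) * fine (Suc n) \<le> 2 * (2 * real n + 3) * fine n"
proof (cases "n = 2")
  case True
  then show ?thesis by (simp add: fine_small_values flip: numeral_3_eq_3)
next
  case False
  with assms fine_ratio_bounds show ?thesis by simp
qed

theorem corollary3p2:
  fixes k :: nat
  assumes "k \<ge> 3"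
  shows "fine (k - 1) * fine (k + 1) \<ge> (fine k)^2"
proof -
  obtain n where k: "k = Suc n" and "n \<ge> 2" using assms by (cases k) auto
  have upper: "(real n + 3) * fine (Suc n) \<le> 2 * (2 * real n + 3) * fine n"
    using fine_ratio_upper \<open>n \<ge> 2\<close> by blast
  have lower: "2 * (2 * real n + 3) * fine (Suc n) \<le> (real n + 3) * fine (Suc (Suc n))"
    using fine_ratio_bounds[of "Suc n"] \<open>n \<ge> 2\<close> by (simp add: algebra_simps)
  have "(fine (Suc n))\<^sup>2 \<le> fine n * fine (Suc (Suc n))"
    by (rule square_le_mult_of_separated_ratios[OF fine_nonneg fine_nonneg _ upper lower]) simp
  then show ?thesis unfolding k by simp
qed

end
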